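(* Let $\sigma$ be a strongly erasing $k$-block substitution with $w_\epsilon\ne1^k$ that satisfies the optimality condition. Then the set $\mathcal D$ of points $x\in\mathbb I$ whose $f_\sigma$-orbit $\{f_\sigma^n(x):n\ge0\}$ is dense in $\mathbb I$ is uncountable and dense in $\mathbb I$.
   Context: Notation: $\mathbb I=[0,1]$. $\{0,1\}^*$ and $\{0,1\}^\omega$ denote finite and infinite binary words, and $\epsilon$ is the empty word. For a word $w$, set $0.w=\sum_iw_i2^{-i}$. For $x\in(0,1]$, $\widetilde x$ is the unique infinite binary expansion of $x$ not ending in $0^\infty$. Fix $k\ge2$. An erasing $k$-block substitution is a map $\sigma:\{0,1\}^k\to\{0,1\}^*$ with exactly one block $w_\epsilon$ such that $\sigma(w_\epsilon)=\epsilon$. It acts blockwise on infinite words and on finite words of length a multiple of $k$, concatenating the images of consecutive $k$-blocks. $k$-rounding: a $k$-rounding of $w$ is any word $wv$ whose length is the least multiple of $k$ that is $\ge|w|$; if $|w|$ is a multiple of $k$, the only $k$-rounding of $w$ is $w$ itself. $\sigma$ is strongly erasing if for every $w\in\{0,1\}^*$ there exist $n\in\mathbb N$ and words $r_0,\dots,r_{n-1}$ such that $r_0$ is a $k$-rounding of $w$, $r_j$ is a $k$-rounding of $\sigma(r_{j-1})$ for $1\le j\le n-1$, and $\sigma(r_{n-1})=\epsilon$. The map $f_\sigma:\mathbb I\to\mathbb I$ is defined by $f_\sigma(x)=0.\sigma(\widetilde x)$ if $x\in(0,1]$ and $\widetilde x\neq w_\epsilon^\infty$, and $f_\sigma(x)=0$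 otherwise. Optimality condition: every $w\in\{0,1\}^\omega$ can be written as $w=\prod_{i\ge1}\sigma(b_i)$ with blocks $b_i\in\{0,1\}^k$ satisfying $\sigma(b_i)\ne\epsilon$. *)

theory Defs
  imports "HOL-Analysis.Analysis"
begin

text \<open>Binary digits are booleans (True = 1). Finite words: bool list; infinite words: nat => bool
  (index 0 is the first letter).\<close>

definition binval :: "bool list \<Rightarrow> real" where
  "binval w = (\<Sum>i<length w. (if w ! i then 1 else 0) / 2 ^ (i + 1))"

definition binval_inf :: "(nat \<Rightarrow> bool) \<Rightarrow> real" where
  "binval_inf w = (\<Sum>i. (if w i then 1 else 0) / 2 ^ (i + 1))"

text \<open>The unique infinite binary expansion of x in (0,1] not ending in 0^omega.\<close>
definition tilde :: "real \<Rightarrow> (nat \<Rightarrow> bool)" where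
  "tilde x = (THE w. (\<forall>n. \<exists>m>n. w m) \<and> binval_inf w = x)"

text \<open>A substitution is a map sigma on words; only its values on blocks of length k matter.\<close>
definition erasing_subst :: "nat \<Rightarrow> (bool list \<Rightarrow> bool list) \<Rightarrow> bool" where
  "erasing_subst k \<sigma> \<longleftrightarrow> 2 \<le> k \<and> (\<exists>!b. length b = k \<and> \<sigma> b = [])"

definition w_eps :: "nat \<Rightarrow> (bool list \<Rightarrow> bool list) \<Rightarrow> bool list" where
  "w_eps k \<sigma> = (THE b. length b = k \<and> \<sigma> b = [])"

definition subst_fin :: "nat \<Rightarrow> (bool list \<Rightarrow> bool list) \<Rightarrow> bool list \<Rightarrow> bool list" where
  "subst_fin k \<sigma> w = concat (map (\<lambda>i. \<sigma> (take k (drop (i * k) w))) [0..<length w div k])"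

definition block :: "nat \<Rightarrow> (nat \<Rightarrow> bool) \<Rightarrow> nat \<Rightarrow> bool list" where
  "block k w i = map w [i * k..<(i + 1) * k]"

definition concat_val :: "(nat \<Rightarrow> bool list) \<Rightarrow> real" where
  "concat_val u = (\<Sum>i. binval (u i) / 2 ^ length (concat (map u [0..<i])))"

definition is_inf_concat :: "(nat \<Rightarrow> bool) \<Rightarrow> (nat \<Rightarrow> bool list) \<Rightarrow> bool" where
  "is_inf_concat w u \<longleftrightarrow>
     (\<forall>n. map w [0..<length (concat (map u [0..<n]))] = concat (map u [0..<n]))"

definition k_rounding :: "nat \<Rightarrow> bool list \<Rightarrow> bool list \<Rightarrow> bool" where
  "k_rounding k w r \<longleftrightarrow> take (length w) r = w \<and> length w \<le> length r \<and> k dvd length r \<and>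
     (\<forall>m. k dvd m \<and> length w \<le> m \<longrightarrow> length r \<le> m)"

definition strongly_erasing :: "nat \<Rightarrow> (bool list \<Rightarrow> bool list) \<Rightarrow> bool" where
  "strongly_erasing k \<sigma> \<longleftrightarrow>
     (\<forall>w. \<exists>rs. rs \<noteq> [] \<and> k_rounding k w (rs ! 0) \<and>
        (\<forall>j. 1 \<le> j \<and> j < length rs \<longrightarrow> k_rounding k (subst_fin k \<sigma> (rs ! (j - 1))) (rs ! j)) \<and>
        subst_fin k \<sigma> (last rs) = [])"

definition f_sigma :: "nat \<Rightarrow> (bool list \<Rightarrow> bool list) \<Rightarrow> real \<Rightarrow> real" where
  "f_sigma k \<sigma> x =
     (if 0 < x \<and> x \<le> 1 \<and> tilde x \<noteq> (\<lambda>n. w_eps k \<sigma> ! (n mod k))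
      then concat_val (\<lambda>i. \<sigma> (block k (tilde x) i)) else 0)"

definition optimal :: "nat \<Rightarrow> (bool list \<Rightarrow> bool list) \<Rightarrow> bool" where
  "optimal k \<sigma> \<longleftrightarrow>
     (\<forall>w :: nat \<Rightarrow> bool. \<exists>b :: nat \<Rightarrow> bool list.
        (\<forall>i. length (b i) = k \<and> \<sigma> (b i) \<noteq> []) \<and> is_inf_concat w (\<lambda>i. \<sigma> (b i)))"

end

theory Submission
  imports Defs
begin

text \<open>On points whose expansion has infinitely many ones and infinitely many non-erased
  blocks, \<open>f_sigma\<close> is the substitution acting on infinite words, so orbits can be followed
  symbolically. Optimality gives every infinite word a preimage of this kind, extending any
  prescribed prefix whose image it continues; strong erasure pushes every finite word through a
  chain of \<open>k\<close>-roundings to the empty word. Lifting such chains backwards, any prefix can be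
  extended so that the orbit of every continuation passes through a prescribed finite word, and
  a prefix of the lifted point is enough because the iterates of the substitution are continuous
  there. Running through all finite words while planting an arbitrary bit at each stage gives,
  for every bit sequence, a point with dense orbit; distinct sequences give distinct points, and
  starting from an arbitrary prefix shows that these points are dense in the unit interval.\<close>

subsection \<open>Prefixes and infinite concatenations\<close>

definition prefix_of :: "'a list \<Rightarrow> (nat \<Rightarrow> 'a) \<Rightarrow> bool" where
  "prefix_of P X \<longleftrightarrow> map X [0..<length P] = P"

lemma prefix_of_iff: "prefix_of P X \<longleftrightarrow> (\<forall>i<length P. X i = P ! i)"
  unfolding prefix_of_def by (metis (no_types, lifting) add_0 diff_zero length_map length_upt
      nth_equalityI nth_map_upt)

lemma prefix_of_map_upt [simp]: "prefix_of (map X [0..<n]) X"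
  by (simp add: prefix_of_def)

lemma map_upt_add: "map f [0..<a + b] = map f [0..<a] @ map (\<lambda>i. f (i + a)) [0..<b]"
  by (rule nth_equalityI) (auto simp: nth_append)

lemma prefix_of_append_iff:
  "prefix_of (P @ Q) X \<longleftrightarrow> prefix_of P X \<and> prefix_of Q (\<lambda>i. X (i + length P))"
  unfolding prefix_of_def by (simp add: map_upt_add append_eq_append_conv)

lemma prefix_of_appendD: "prefix_of (P @ Q) X \<Longrightarrow> prefix_of P X"
  by (simp add: prefix_of_append_iff)

lemma prefix_of_agree:
  "prefix_of P X \<Longrightarrow> length P \<le> n \<Longrightarrow> \<forall>i<n. Y i = X i \<Longrightarrow> prefix_of P Y"
  by (simp add: prefix_of_iff)

lemma map_upt_extends_prefix:
  assumes "prefix_of P X" "length P \<le> n"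
  shows "\<exists>c. map X [0..<n] = P @ c"
proof -
  have "map X [0..<n] = map X [0..<length P] @ map X [length P..<n]"
    using assms(2) by (metis le_add_diff_inverse upt_add_eq_append zero_le map_append)
  then show ?thesis using assms(1) by (auto simp: prefix_of_def)
qed

definition concat_upto :: "(nat \<Rightarrow> 'a list) \<Rightarrow> nat \<Rightarrow> 'a list" where
  "concat_upto u n = concat (map u [0..<n])"

lemma concat_upto_0 [simp]: "concat_upto u 0 = []"
  and concat_upto_Suc [simp]: "concat_upto u (Suc n) = concat_upto u n @ u n"
  by (simp_all add: concat_upto_def)

lemma concat_upto_add: "concat_upto u (q + m) = concat_upto u q @ concat_upto (\<lambda>i. u (q + i)) m"
  by (induction m) simp_all

lemma concat_upto_mono: "n \<le> n' \<Longrightarrow> \<exists>c. concat_upto u n' = concat_upto u n @ c"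
  using concat_upto_add[of u n "n' - n"] by auto

lemma length_concat_upto_mono: "n \<le> n' \<Longrightarrow> length (concat_upto u n) \<le> length (concat_upto u n')"
  by (metis concat_upto_mono length_append le_add1)

lemma length_concat_upto_unbounded:
  assumes "\<exists>\<^sub>\<infinity>i. u i \<noteq> []"
  shows "\<exists>n. M \<le> length (concat_upto u n)"
proof (induction M)
  case (Suc M)
  then obtain n where n: "M \<le> length (concat_upto u n)" by blast
  obtain i where i: "n \<le> i" "u i \<noteq> []" using assms by (auto simp: INFM_nat_le)
  have "length (concat_upto u n) < length (concat_upto u (Suc i))"
    using i length_concat_upto_mono[of n i u] by (simp add: less_add_same_cancel1 le_less_trans)
  then have "Suc M \<le> length (concat_upto u (Suc i))" using n by linarith
  then show ?case by blast
qed simp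

lemma is_inf_concat_iff: "is_inf_concat X u \<longleftrightarrow> (\<forall>n. prefix_of (concat_upto u n) X)"
  by (simp add: is_inf_concat_def prefix_of_def concat_upto_def)

text \<open>Positions beyond every finite stage of the concatenation get the junk value False.\<close>
definition inf_concat :: "(nat \<Rightarrow> bool list) \<Rightarrow> nat \<Rightarrow> bool" where
  "inf_concat u j = (if \<exists>N. j < length (concat_upto u N)
     then concat_upto u (LEAST N. j < length (concat_upto u N)) ! j else False)"

lemma inf_concat_nth:
  assumes "j < length (concat_upto u N)"
  shows "inf_concat u j = concat_upto u N ! j"
proof -
  let ?N0 = "LEAST N. j < length (concat_upto u N)"
  have j: "j < length (concat_upto u ?N0)" using assms by (rule LeastI)
  obtain c where "concat_upto u N = concat_upto u ?N0 @ c"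
    using concat_upto_mono[OF Least_le[of "\<lambda>N. j < length (concat_upto u N)" N, OF assms]] by blast
  then show ?thesis using assms j by (auto simp: inf_concat_def nth_append)
qed

lemma is_inf_concat_inf_concat: "is_inf_concat (inf_concat u) u"
  by (simp add: is_inf_concat_iff prefix_of_iff inf_concat_nth)

lemma is_inf_concat_unique:
  assumes "is_inf_concat Y u" "\<exists>\<^sub>\<infinity>i. u i \<noteq> []"
  shows "Y = inf_concat u"
proof
  fix j
  obtain n where n: "Suc j \<le> length (concat_upto u n)"
    using length_concat_upto_unbounded[OF assms(2)] by blast
  then have "Y j = concat_upto u n ! j"
    using assms(1) by (simp add: is_inf_concat_iff prefix_of_iff)
  then show "Y j = inf_concat u j" using n inf_concat_nth[of j u n] by simp
qed

lemma is_inf_concat_shift: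
  assumes "prefix_of (concat_upto u q) Y"
    and "is_inf_concat (\<lambda>i. Y (i + length (concat_upto u q))) (\<lambda>i. u (q + i))"
  shows "is_inf_concat Y u"
  unfolding is_inf_concat_iff
proof
  fix n
  show "prefix_of (concat_upto u n) Y"
  proof (cases "n \<le> q")
    case True
    then obtain c where "concat_upto u q = concat_upto u n @ c" using concat_upto_mono by blast
    then show ?thesis using assms(1) prefix_of_appendD by metis
  next
    case False
    then have "concat_upto u n = concat_upto u q @ concat_upto (\<lambda>i. u (q + i)) (n - q)"
      using concat_upto_add[of u q "n - q"] by simp
    moreover have "prefix_of (concat_upto (\<lambda>i. u (q + i)) (n - q))
        (\<lambda>i. Y (i + length (concat_upto u q)))"
      using assms(2) unfolding is_inf_concat_iff ..
    ultimately show ?thesis using assms(1) prefix_of_append_iff by metis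
  qed
qed

lemma is_inf_concat_interleave_Nil:
  assumes "is_inf_concat X v"
  shows "is_inf_concat X (\<lambda>i. if even i then [] else v (i div 2))"
proof -
  have "concat_upto (\<lambda>i. if even i then [] else v (i div 2)) m = concat_upto v (m div 2)" for m
  proof (induction m)
    case (Suc m)
    then show ?case by (cases "even m") (auto elim: oddE)
  qed simp
  then show ?thesis using assms unfolding is_inf_concat_iff by presburger
qed

subsection \<open>Binary values\<close>

definition digit_val :: "(nat \<Rightarrow> bool) \<Rightarrow> nat \<Rightarrow> real" where
  "digit_val X i = (if X i then 1 else 0) / 2 ^ (i + 1)"

lemma digit_val_nonneg: "0 \<le> digit_val X i"
  by (simp add: digit_val_def)

lemma digit_val_le: "digit_val X i \<le> (1/2) ^ (i + 1)"
  by (simp add: digit_val_def power_one_over)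

lemma digit_val_True: "X i \<Longrightarrow> digit_val X i = (1/2) ^ (i + 1)"
  by (simp add: digit_val_def power_one_over)

lemma summable_digit_val: "summable (digit_val X)"
  by (rule summable_comparison_test'[OF summable_geometric[of "1/2::real", THEN summable_ignore_initial_segment, of 1]])
    (use digit_val_le digit_val_nonneg in auto)

lemma binval_inf_eq_suminf: "binval_inf X = suminf (digit_val X)"
  unfolding binval_inf_def digit_val_def ..

lemma binval_map_upt: "binval (map X [0..<n]) = (\<Sum>i<n. digit_val X i)"
  unfolding binval_def digit_val_def by simp

lemma binval_inf_ge_partial: "(\<Sum>i<n. digit_val X i) \<le> binval_inf X" for X n
  unfolding binval_inf_eq_suminf
  by (rule sum_le_suminf[OF summable_digit_val]) (auto simp: digit_val_nonneg)

lemma binval_inf_le_partial: "binval_inf X \<le> (\<Sum>i<n. digit_val X i) + (1/2) ^ n"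
proof -
  have geo: "(\<lambda>i. (1/2::real) ^ (i + n + 1)) sums (1/2) ^ n"
    using sums_mult[OF geometric_sums[of "1/2::real"], of "(1/2) ^ (n + 1)"]
    by (simp add: power_add mult.commute)
  have "binval_inf X = (\<Sum>i. digit_val X (i + n)) + (\<Sum>i<n. digit_val X i)"
    unfolding binval_inf_eq_suminf by (rule suminf_split_initial_segment[OF summable_digit_val])
  also have "(\<Sum>i. digit_val X (i + n)) \<le> (\<Sum>i. (1/2) ^ (i + n + 1))"
  proof (rule suminf_le)
    show "summable (\<lambda>i. digit_val X (i + n))"
      using summable_digit_val by (rule summable_ignore_initial_segment)
    show "summable (\<lambda>i. (1/2::real) ^ (i + n + 1))"
      using geo by (rule sums_summable)
  qed (rule digit_val_le)
  also have "\<dots> = (1/2) ^ n"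
    using geo by (rule sums_unique[symmetric])
  finally show ?thesis by simp
qed

lemma binval_inf_nonneg: "0 \<le> binval_inf X"
  using binval_inf_ge_partial[of X 0] by simp

lemma binval_inf_le_1: "binval_inf X \<le> 1"
  using binval_inf_le_partial[of X 0] by simp

lemma binval_inf_prefix:
  assumes "prefix_of v X"
  shows "\<bar>binval_inf X - binval v\<bar> \<le> (1/2) ^ length v"
  using binval_inf_ge_partial[of X "length v"] binval_inf_le_partial[of X "length v"]
    binval_map_upt[of X "length v"] assms by (simp add: prefix_of_def)

lemma binval_inf_pos:
  assumes "X m"
  shows "0 < binval_inf X"
proof -
  have "0 < (\<Sum>i<Suc m. digit_val X i)"
    using assms by (intro sum_pos2[of _ m]) (auto simp: digit_val_def)
  then show ?thesis using binval_inf_ge_partial[of X "Suc m"] by linarith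
qed

text \<open>The tail of \<open>X\<close> after its first disagreement contributes at most \<open>(1/2) ^ (n+1)\<close>,
  which is strictly less than the contribution of \<open>Y\<close> there, since \<open>Y\<close> has a further one.\<close>
lemma binval_inf_less:
  assumes "\<forall>i<n. X i = Y i" "\<not> X n" "Y n" "\<exists>m>n. Y m"
  shows "binval_inf X < binval_inf Y"
proof -
  obtain m where m: "m > n" "Y m" using assms(4) by blast
  have eq: "(\<Sum>i<n. digit_val X i) = (\<Sum>i<n. digit_val Y i)"
    using assms(1) by (simp add: digit_val_def)
  have "binval_inf X \<le> (\<Sum>i<Suc n. digit_val X i) + (1/2) ^ Suc n"
    by (rule binval_inf_le_partial)
  also have "\<dots> = (\<Sum>i<n. digit_val Y i) + (1/2) ^ Suc n"
    using eq assms(2) by (simp add: digit_val_def)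
  also have "\<dots> < (\<Sum>i<n. digit_val Y i) + digit_val Y n + digit_val Y m"
    using digit_val_True[of Y n] digit_val_True[of Y m] assms(3) m(2) by simp
  also have "\<dots> = (\<Sum>i\<in>{..<n} \<union> {n, m}. digit_val Y i)"
    using m(1) by (subst sum.union_disjoint) auto
  also have "\<dots> \<le> (\<Sum>i<Suc m. digit_val Y i)"
    using m(1) by (intro sum_mono2) (auto simp: digit_val_nonneg)
  also have "\<dots> \<le> binval_inf Y"
    by (rule binval_inf_ge_partial)
  finally show ?thesis .
qed

lemma binval_inf_inj:
  assumes "\<exists>\<^sub>\<infinity>i. X i" "\<exists>\<^sub>\<infinity>i. Y i" "binval_inf X = binval_inf Y"
  shows "X = Y"
proof (rule ccontr)
  assume "X \<noteq> Y"
  define n where "n = (LEAST n. X n \<noteq> Y n)"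
  have "\<exists>n. X n \<noteq> Y n" using \<open>X \<noteq> Y\<close> by auto
  then have d: "X n \<noteq> Y n" unfolding n_def by (rule LeastI_ex)
  have b: "\<forall>i<n. X i = Y i" unfolding n_def using not_less_Least by blast
  show False
  proof (cases "X n")
    case True
    then have "binval_inf Y < binval_inf X"
      using d b assms(1) binval_inf_less[of n Y X] by (auto simp: INFM_nat)
    then show False using assms(3) by simp
  next
    case False
    then have "binval_inf X < binval_inf Y"
      using d b assms(2) binval_inf_less[of n X Y] by (auto simp: INFM_nat)
    then show False using assms(3) by simp
  qed
qed

lemma tilde_binval_inf:
  assumes "\<exists>\<^sub>\<infinity>i. X i"
  shows "tilde (binval_inf X) = X"
  unfolding tilde_def
proof (rule the_equality)
  show "(\<forall>n. \<exists>m>n. X m) \<and> binval_inf X = binval_inf X" using assms by (simp add: INFM_nat)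
  fix w assume "(\<forall>n. \<exists>m>n. w m) \<and> binval_inf w = binval_inf X"
  then show "w = X" using binval_inf_inj[of w X] assms by (auto simp: INFM_nat)
qed

lemma binval_Cons: "binval (b # w) = (if b then 1 else 0) / 2 + binval w / 2"
  unfolding binval_def length_Cons sum.lessThan_Suc_shift by (simp add: sum_divide_distrib)

lemma binval_append: "binval (a @ b) = binval a + binval b / 2 ^ length a"
  by (induction a) (auto simp: binval_Cons binval_def[of "[]"] field_simps)

lemma binval_concat_upto:
  "binval (concat_upto u n) = (\<Sum>i<n. binval (u i) / 2 ^ length (concat_upto u i))"
  by (induction n) (auto simp: binval_append binval_def[of "[]"])

lemma concat_val_eq_binval_inf:
  assumes "is_inf_concat Y u" "\<exists>\<^sub>\<infinity>i. u i \<noteq> []"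
  shows "concat_val u = binval_inf Y"
proof -
  have partial: "(\<Sum>i<n. binval (u i) / 2 ^ length (concat_upto u i))
      = (\<Sum>i<length (concat_upto u n). digit_val Y i)" for n
    using assms(1) binval_concat_upto[of u n] binval_map_upt[of Y "length (concat_upto u n)"]
    by (simp add: is_inf_concat_iff prefix_of_def)
  have "filterlim (\<lambda>n. length (concat_upto u n)) at_top sequentially"
    unfolding filterlim_at_top eventually_sequentially
    using length_concat_upto_unbounded[OF assms(2)] length_concat_upto_mono
    by (meson order_trans)
  then have "(\<lambda>n. \<Sum>i<length (concat_upto u n). digit_val Y i) \<longlonglongrightarrow> binval_inf Y"
    using filterlim_compose[OF summable_LIMSEQ[OF summable_digit_val]]
    by (simp add: binval_inf_eq_suminf)
  then have "(\<lambda>i. binval (u i) / 2 ^ length (concat_upto u i)) sums binval_inf Y"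
    unfolding sums_def partial .
  then show ?thesis unfolding concat_val_def concat_upto_def[symmetric] by (rule sums_unique[symmetric])
qed

lemma binval_exists: "m < 2 ^ L \<Longrightarrow> \<exists>v. length v = L \<and> binval v = real m / 2 ^ L"
proof (induction L arbitrary: m)
  case 0 then show ?case by (simp add: binval_def)
next
  case (Suc L)
  show ?case
  proof (cases "m < 2 ^ L")
    case True
    then obtain v where "length v = L" "binval v = real m / 2 ^ L" using Suc.IH by blast
    then show ?thesis by (intro exI[of _ "False # v"]) (simp add: binval_Cons)
  next
    case False
    then have "m - 2 ^ L < 2 ^ L" using Suc.prems by simp
    then obtain v where v: "length v = L" "binval v = real (m - 2 ^ L) / 2 ^ L"
      using Suc.IH by blast
    have "binval (True # v) = real m / 2 ^ Suc L"
      using v False by (simp add: binval_Cons of_nat_diff field_simps)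
    then show ?thesis using v by (intro exI[of _ "True # v"]) simp
  qed
qed

lemma binval_approx:
  assumes "0 \<le> y" "y \<le> 1"
  shows "\<exists>v. length v = L \<and> \<bar>binval v - y\<bar> \<le> (1/2) ^ L"
proof -
  define m where "m = min (nat \<lfloor>y * 2 ^ L\<rfloor>) (2 ^ L - 1)"
  have m: "m < 2 ^ L" unfolding m_def by (simp add: min.strict_coboundedI2)
  obtain v where v: "length v = L" "binval v = real m / 2 ^ L" using binval_exists[OF m] by blast
  define F where "F = \<lfloor>y * 2 ^ L\<rfloor>"
  have F: "real_of_int F \<le> y * 2 ^ L" "y * 2 ^ L < real_of_int F + 1" "0 \<le> F"
    using assms unfolding F_def by (simp_all add: of_int_floor_le)
  have "real m \<le> y * 2 ^ L \<and> y * 2 ^ L \<le> real m + 1"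
  proof (cases "nat F \<le> 2 ^ L - 1")
    case True
    then have "real m = real_of_int F" using F(3) unfolding m_def F_def[symmetric] by simp
    then show ?thesis using F by linarith
  next
    case False
    have "(1::nat) \<le> 2 ^ L" by simp
    then have "2 ^ L \<le> nat F" using False by linarith
    then have "int (2 ^ L) \<le> F" using F(3) by (simp add: le_nat_iff)
    then have "2 ^ L \<le> real_of_int F" by (metis of_int_le_iff of_int_of_nat_eq of_nat_numeral of_nat_power)
    moreover have "real m = 2 ^ L - 1" using False unfolding m_def F_def[symmetric] by (simp add: of_nat_diff)
    moreover have "y * 2 ^ L \<le> 2 ^ L" using assms by simp
    ultimately show ?thesis using F by linarith
  qed
  then have "\<bar>real m - y * 2 ^ L\<bar> \<le> 1" by linarith
  then have "\<bar>real m / 2 ^ L - y\<bar> \<le> 1 / 2 ^ L"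
    by (simp add: abs_le_iff field_simps)
  then show ?thesis using v by (intro exI[of _ v]) (simp add: power_one_over)
qed

text \<open>Taking words of length divisible by \<open>k\<close> suffices, since such lengths are unbounded.\<close>
lemma unit_interval_subset_closure:
  assumes "0 < k" and words: "\<And>v. k dvd length v \<Longrightarrow> \<exists>X. prefix_of v X \<and> binval_inf X \<in> S"
  shows "{0..1} \<subseteq> closure S"
proof
  fix y :: real assume y: "y \<in> {0..1}"
  show "y \<in> closure S" unfolding closure_approachable
  proof (intro allI impI)
    fix e :: real assume "0 < e"
    then obtain L where L: "(1/2::real) ^ L < e / 2"
      using real_arch_pow_inv[of "e/2" "1/2::real"] by auto
    have le: "(1/2::real) ^ (k * L) \<le> (1/2) ^ L"
      using assms(1) by (intro power_decreasing) auto
    obtain v where v: "length v = k * L" "\<bar>binval v - y\<bar> \<le> (1/2) ^ (k * L)"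
      using binval_approx y by auto
    obtain X where X: "prefix_of v X" "binval_inf X \<in> S"
      using words[of v] v(1) by auto
    have "dist (binval_inf X) y < e"
      unfolding dist_real_def using binval_inf_prefix[OF X(1), unfolded v(1)] v(2) le L by linarith
    then show "\<exists>x\<in>S. dist x y < e" using X(2) by blast
  qed
qed

subsection \<open>Blocks and the substitution on infinite words\<close>

lemma erasing_subst_k_ge_2: "erasing_subst k \<sigma> \<Longrightarrow> 2 \<le> k"
  by (simp add: erasing_subst_def)

lemma
  assumes "erasing_subst k \<sigma>"
  shows length_w_eps: "length (w_eps k \<sigma>) = k"
    and subst_w_eps: "\<sigma> (w_eps k \<sigma>) = []"
    and erased_block_eq_w_eps: "\<And>b. length b = k \<Longrightarrow> \<sigma> b = [] \<Longrightarrow> b = w_eps k \<sigma>"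
proof -
  have ex1: "\<exists>!b. length b = k \<and> \<sigma> b = []" using assms by (simp add: erasing_subst_def)
  then have "length (w_eps k \<sigma>) = k \<and> \<sigma> (w_eps k \<sigma>) = []"
    unfolding w_eps_def by (rule theI')
  then show "length (w_eps k \<sigma>) = k" "\<sigma> (w_eps k \<sigma>) = []"
    and "\<And>b. length b = k \<Longrightarrow> \<sigma> b = [] \<Longrightarrow> b = w_eps k \<sigma>" using ex1 by blast+
qed

lemma length_block [simp]: "length (block k X i) = k"
  by (simp add: block_def algebra_simps)

lemma block_nth: "j < k \<Longrightarrow> block k X i ! j = X (i * k + j)"
  by (simp add: block_def)

lemma block_cong: "\<forall>j<(i + 1) * k. X j = Y j \<Longrightarrow> block k X i = block k Y i"
  by (simp add: block_def)

lemma block_periodic: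
  assumes "length w = k"
  shows "block k (\<lambda>n. w ! (n mod k)) i = w"
  by (rule nth_equalityI) (use assms in \<open>simp_all add: block_nth\<close>)

definition subst_inf :: "nat \<Rightarrow> (bool list \<Rightarrow> bool list) \<Rightarrow> (nat \<Rightarrow> bool) \<Rightarrow> nat \<Rightarrow> bool" where
  "subst_inf k \<sigma> X = inf_concat (\<lambda>i. \<sigma> (block k X i))"

text \<open>The words on which \<open>f_sigma\<close> acts as \<open>subst_inf\<close>: \<open>X\<close> is then the expansion
  \<open>tilde\<close> of its value, and its image is an infinite word.\<close>
definition nondegenerate :: "nat \<Rightarrow> (bool list \<Rightarrow> bool list) \<Rightarrow> (nat \<Rightarrow> bool) \<Rightarrow> bool" where
  "nondegenerate k \<sigma> X \<longleftrightarrow> (\<exists>\<^sub>\<infinity>i. X i) \<and> (\<exists>\<^sub>\<infinity>i. \<sigma> (block k X i) \<noteq> [])"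

lemma f_sigma_binval_inf:
  assumes "erasing_subst k \<sigma>" "nondegenerate k \<sigma> X"
  shows "f_sigma k \<sigma> (binval_inf X) = binval_inf (subst_inf k \<sigma> X)"
proof -
  have ones: "\<exists>\<^sub>\<infinity>i. X i" and nonerased: "\<exists>\<^sub>\<infinity>i. \<sigma> (block k X i) \<noteq> []"
    using assms(2) by (simp_all add: nondegenerate_def)
  obtain m where "X m" using ones by (auto simp: INFM_nat)
  then have pos: "0 < binval_inf X" by (rule binval_inf_pos)
  have "X \<noteq> (\<lambda>n. w_eps k \<sigma> ! (n mod k))"
  proof
    assume periodic: "X = (\<lambda>n. w_eps k \<sigma> ! (n mod k))"
    obtain i where "\<sigma> (block k X i) \<noteq> []" using nonerased by (auto simp: INFM_nat)
    then show False
      unfolding periodic block_periodic[OF length_w_eps[OF assms(1)]] subst_w_eps[OF assms(1)] by simp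
  qed
  then have "f_sigma k \<sigma> (binval_inf X) = concat_val (\<lambda>i. \<sigma> (block k X i))"
    unfolding f_sigma_def tilde_binval_inf[OF ones] using pos binval_inf_le_1[of X] by simp
  also have "\<dots> = binval_inf (subst_inf k \<sigma> X)"
    unfolding subst_inf_def by (rule concat_val_eq_binval_inf[OF is_inf_concat_inf_concat nonerased])
  finally show ?thesis .
qed

lemma f_sigma_iter_binval_inf:
  assumes "erasing_subst k \<sigma>" "\<And>t. nondegenerate k \<sigma> ((subst_inf k \<sigma> ^^ t) X)"
  shows "(f_sigma k \<sigma> ^^ t) (binval_inf X) = binval_inf ((subst_inf k \<sigma> ^^ t) X)"
  by (induction t) (simp_all add: f_sigma_binval_inf[OF assms])

lemma subst_fin_prefix:
  assumes "prefix_of P X"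
  shows "subst_fin k \<sigma> P = concat_upto (\<lambda>i. \<sigma> (block k X i)) (length P div k)"
  unfolding subst_fin_def concat_upto_def
proof (intro arg_cong[where f=concat] map_cong refl)
  fix i assume "i \<in> set [0..<length P div k]"
  then have i: "Suc i \<le> length P div k" by simp
  then have "0 < k" by (cases "k = 0") auto
  then have "(i + 1) * k \<le> length P" using i less_eq_div_iff_mult_less_eq by simp
  then have "take k (drop (i * k) P) = block k X i"
    using assms by (intro nth_equalityI) (auto simp: prefix_of_iff block_nth algebra_simps)
  then show "\<sigma> (take k (drop (i * k) P)) = \<sigma> (block k X i)" by simp
qed

lemma prefix_of_subst_fin:
  "prefix_of P X \<Longrightarrow> prefix_of (subst_fin k \<sigma> P) (subst_inf k \<sigma> X)"
  using is_inf_concat_inf_concat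
  by (simp add: subst_fin_prefix subst_inf_def is_inf_concat_iff)

lemma subst_inf_continuous:
  assumes "0 < k" "\<exists>\<^sub>\<infinity>i. \<sigma> (block k Z i) \<noteq> []"
  shows "\<exists>N. \<forall>X. (\<forall>i<N. X i = Z i) \<longrightarrow> (\<forall>i<M. subst_inf k \<sigma> X i = subst_inf k \<sigma> Z i)"
proof -
  obtain n where n: "M \<le> length (concat_upto (\<lambda>i. \<sigma> (block k Z i)) n)"
    using length_concat_upto_unbounded[OF assms(2)] by blast
  let ?P = "map Z [0..<n * k]"
  have "\<forall>i<M. subst_inf k \<sigma> X i = subst_inf k \<sigma> Z i" if "\<forall>i<n * k. X i = Z i" for X
  proof -
    have "prefix_of (subst_fin k \<sigma> ?P) (subst_inf k \<sigma> X)"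
      using that by (intro prefix_of_subst_fin) (simp add: prefix_of_iff)
    moreover have "prefix_of (subst_fin k \<sigma> ?P) (subst_inf k \<sigma> Z)"
      by (intro prefix_of_subst_fin) simp
    moreover have "subst_fin k \<sigma> ?P = concat_upto (\<lambda>i. \<sigma> (block k Z i)) n"
      using subst_fin_prefix[of ?P Z] assms(1) by simp
    ultimately show ?thesis using n by (auto simp: prefix_of_iff)
  qed
  then show ?thesis by blast
qed

lemma subst_inf_iter_continuous:
  assumes "0 < k" "\<forall>s<t. \<exists>\<^sub>\<infinity>i. \<sigma> (block k ((subst_inf k \<sigma> ^^ s) Z) i) \<noteq> []"
  shows "\<exists>N. \<forall>X. (\<forall>i<N. X i = Z i) \<longrightarrow>
    (\<forall>i<M. (subst_inf k \<sigma> ^^ t) X i = (subst_inf k \<sigma> ^^ t) Z i)"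
  using assms(2)
proof (induction t arbitrary: M)
  case 0
  then show ?case by auto
next
  case (Suc t)
  obtain N' where N': "\<forall>X. (\<forall>i<N'. X i = (subst_inf k \<sigma> ^^ t) Z i) \<longrightarrow>
      (\<forall>i<M. subst_inf k \<sigma> X i = subst_inf k \<sigma> ((subst_inf k \<sigma> ^^ t) Z) i)"
    using subst_inf_continuous[OF assms(1)] Suc.prems by blast
  have "\<forall>s<t. \<exists>\<^sub>\<infinity>i. \<sigma> (block k ((subst_inf k \<sigma> ^^ s) Z) i) \<noteq> []"
    using Suc.prems by simp
  then obtain N where N: "\<forall>X. (\<forall>i<N. X i = Z i) \<longrightarrow>
      (\<forall>i<N'. (subst_inf k \<sigma> ^^ t) X i = (subst_inf k \<sigma> ^^ t) Z i)"
    using Suc.IH by presburger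
  have "\<forall>i<M. (subst_inf k \<sigma> ^^ Suc t) X i = (subst_inf k \<sigma> ^^ Suc t) Z i"
    if "\<forall>i<N. X i = Z i" for X
  proof -
    have "\<forall>i<N'. (subst_inf k \<sigma> ^^ t) X i = (subst_inf k \<sigma> ^^ t) Z i"
      by (rule mp[OF spec[OF N] that])
    then have "\<forall>i<M. subst_inf k \<sigma> ((subst_inf k \<sigma> ^^ t) X) i
        = subst_inf k \<sigma> ((subst_inf k \<sigma> ^^ t) Z) i"
      by (rule mp[OF spec[OF N']])
    then show ?thesis by simp
  qed
  then show ?case by blast
qed

subsection \<open>Preimages under the substitution\<close>

definition word_of_blocks :: "nat \<Rightarrow> (nat \<Rightarrow> bool list) \<Rightarrow> nat \<Rightarrow> bool" where
  "word_of_blocks k B j = B (j div k) ! (j mod k)"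

lemma block_word_of_blocks: "length (B i) = k \<Longrightarrow> block k (word_of_blocks k B) i = B i"
  by (rule nth_equalityI) (simp_all add: block_nth word_of_blocks_def)

lemma prefix_of_word_of_blocks:
  assumes "k dvd length r" "\<And>i. i < length r div k \<Longrightarrow> B i = take k (drop (i * k) r)"
  shows "prefix_of r (word_of_blocks k B)"
  unfolding prefix_of_iff
proof (intro allI impI)
  fix j assume j: "j < length r"
  then have "0 < k" using assms(1) by (cases "k = 0") auto
  moreover have "j div k < length r div k"
    using j assms(1) by (auto elim!: dvdE simp: less_mult_imp_div_less mult.commute)
  moreover have "j div k * k \<le> length r" using j div_times_less_eq_dividend[of j k] by linarith
  ultimately show "word_of_blocks k B j = r ! j"
    using assms(2) j by (simp add: word_of_blocks_def nth_drop)
qed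

lemma INFM_ones_of_blocks:
  assumes "\<exists>\<^sub>\<infinity>i. True \<in> set (block k X i)"
  shows "\<exists>\<^sub>\<infinity>j. X j"
  unfolding INFM_nat_le
proof
  fix m
  obtain i where i: "m \<le> i" "True \<in> set (block k X i)" using assms by (auto simp: INFM_nat_le)
  then obtain j where "j < length (block k X i)" "block k X i ! j"
    unfolding in_set_conv_nth by blast
  then have j: "j < k" "X (i * k + j)" by (simp_all add: block_nth)
  then have "i \<le> i * k" by simp
  then have "m \<le> i * k + j" using i(1) by linarith
  then show "\<exists>n\<ge>m. X n" using j(2) by blast
qed

text \<open>Interleaving erased blocks guarantees infinitely many ones: if \<open>w_eps\<close> has no one,
  then \<open>w_eps = 0^k\<close>, so every non-erased block contains a one.\<close>
lemma nondegenerate_interleaved: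
  assumes ES: "erasing_subst k \<sigma>"
    and b: "\<And>c. length (b c) = k" "\<And>c. \<sigma> (b c) \<noteq> []"
    and B: "\<And>i. length (B i) = k" "\<And>c. B (q + 2 * c) = w_eps k \<sigma>" "\<And>c. B (Suc (q + 2 * c)) = b c"
  shows "nondegenerate k \<sigma> (word_of_blocks k B)"
proof -
  have ones: "True \<in> set (B (q + 2 * c)) \<or> True \<in> set (B (Suc (q + 2 * c)))" for c
  proof (rule ccontr)
    assume "\<not> ?thesis"
    then have "w_eps k \<sigma> = replicate k False" "b c = replicate k False"
      using B(2,3) length_w_eps[OF ES] b(1)
      by (metis (full_types) replicate_length_same)+
    then show False using erased_block_eq_w_eps[OF ES b(1)] subst_w_eps[OF ES] b(2) by metis
  qed
  have late: "m \<le> q + 2 * m" "m \<le> Suc (q + 2 * m)" for m by simp_all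
  have "\<exists>\<^sub>\<infinity>i. True \<in> set (B i)"
    unfolding INFM_nat_le using ones late by blast
  moreover have "\<exists>\<^sub>\<infinity>i. \<sigma> (B i) \<noteq> []"
    unfolding INFM_nat_le using b(2) B(3) late by metis
  moreover have blocks: "block k (word_of_blocks k B) i = B i" for i
    using B(1) by (rule block_word_of_blocks)
  ultimately show ?thesis
    unfolding nondegenerate_def using INFM_ones_of_blocks[of k "word_of_blocks k B"] by (simp add: blocks)
qed

text \<open>The preimage copies \<open>r\<close> and then alternates \<open>w_eps\<close> with the blocks that optimality
  provides for the rest of \<open>Y\<close>.\<close>
lemma subst_inf_preimage:
  assumes ES: "erasing_subst k \<sigma>" and OPT: "optimal k \<sigma>"
    and r: "k dvd length r" "prefix_of (subst_fin k \<sigma> r) Y"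
  shows "\<exists>z. prefix_of r z \<and> subst_inf k \<sigma> z = Y \<and> nondegenerate k \<sigma> z"
proof -
  define d where "d = length (subst_fin k \<sigma> r)"
  obtain b where b: "\<And>i. length (b i) = k" "\<And>i. \<sigma> (b i) \<noteq> []"
    and b_concat: "is_inf_concat (\<lambda>i. Y (i + d)) (\<lambda>i. \<sigma> (b i))"
    using OPT unfolding optimal_def by metis
  define q where "q = length r div k"
  define B where "B i = (if i < q then take k (drop (i * k) r)
    else if even (i - q) then w_eps k \<sigma> else b ((i - q) div 2))" for i
  have B_tail: "B (q + 2 * c) = w_eps k \<sigma>" "B (Suc (q + 2 * c)) = b c" for c
    by (simp_all add: B_def)
  have length_B: "length (B i) = k" for i
  proof (cases "i < q")
    case True
    then have "0 < k" by (cases "k = 0") (auto simp: q_def)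
    then have "i * k + k \<le> length r"
      using True less_eq_div_iff_mult_less_eq[of k "Suc i" "length r"]
      by (simp add: q_def add.commute Suc_le_eq)
    then show ?thesis using True by (simp add: B_def)
  qed (simp add: B_def length_w_eps[OF ES] b(1))
  define z where "z = word_of_blocks k B"
  have "prefix_of r z"
    unfolding z_def using r(1) by (rule prefix_of_word_of_blocks) (simp add: B_def q_def)
  have head: "concat_upto (\<lambda>i. \<sigma> (B i)) q = subst_fin k \<sigma> r"
    unfolding subst_fin_def concat_upto_def q_def[symmetric]
    by (intro arg_cong[where f=concat] map_cong) (simp_all add: B_def)
  have tail: "(\<lambda>i. \<sigma> (B (q + i))) = (\<lambda>i. if even i then [] else \<sigma> (b (i div 2)))"
  proof
    fix i
    show "\<sigma> (B (q + i)) = (if even i then [] else \<sigma> (b (i div 2)))"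
      using subst_w_eps[OF ES] unfolding B_def by simp
  qed
  have late: "m \<le> Suc (q + 2 * m)" for m by simp
  then have nonerased: "\<exists>\<^sub>\<infinity>i. \<sigma> (B i) \<noteq> []"
    unfolding INFM_nat_le using b(2) B_tail(2) by metis
  have "is_inf_concat Y (\<lambda>i. \<sigma> (B i))"
  proof (rule is_inf_concat_shift[where q = q])
    show "prefix_of (concat_upto (\<lambda>i. \<sigma> (B i)) q) Y" unfolding head by (rule r(2))
    show "is_inf_concat (\<lambda>i. Y (i + length (concat_upto (\<lambda>i. \<sigma> (B i)) q))) (\<lambda>i. \<sigma> (B (q + i)))"
      unfolding head tail d_def[symmetric] by (rule is_inf_concat_interleave_Nil[OF b_concat])
  qed
  then have "Y = subst_inf k \<sigma> z"
    unfolding subst_inf_def z_def block_word_of_blocks[OF length_B]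
    using nonerased by (rule is_inf_concat_unique)
  moreover have "nondegenerate k \<sigma> z"
    unfolding z_def using ES b length_B B_tail by (rule nondegenerate_interleaved)
  ultimately show ?thesis using \<open>prefix_of r z\<close> by blast
qed

subsection \<open>Erasing chains\<close>

fun erasing_chain :: "nat \<Rightarrow> (bool list \<Rightarrow> bool list) \<Rightarrow> bool list list \<Rightarrow> bool" where
  "erasing_chain k \<sigma> [] \<longleftrightarrow> True"
| "erasing_chain k \<sigma> [r] \<longleftrightarrow> k dvd length r \<and> subst_fin k \<sigma> r = []"
| "erasing_chain k \<sigma> (r # r' # R) \<longleftrightarrow>
    k dvd length r \<and> (\<exists>c. r' = subst_fin k \<sigma> r @ c) \<and> erasing_chain k \<sigma> (r' # R)"

lemma subst_fin_Nil [simp]: "subst_fin k \<sigma> [] = []"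
  by (simp add: subst_fin_def)

lemma erasing_chain_append:
  "erasing_chain k \<sigma> A \<Longrightarrow> erasing_chain k \<sigma> B \<Longrightarrow> erasing_chain k \<sigma> (A @ B)"
  by (induction k \<sigma> A rule: erasing_chain.induct) (cases B; auto)+

lemma erasing_chain_replicate_Nil: "erasing_chain k \<sigma> (replicate n [])"
proof (induction n)
  case (Suc n)
  then show ?case by (cases n) auto
qed simp

lemma erasing_chain_of_roundings:
  assumes "rs \<noteq> []" "k dvd length (rs ! 0)" "subst_fin k \<sigma> (last rs) = []"
    and "\<forall>j. 1 \<le> j \<and> j < length rs \<longrightarrow> k_rounding k (subst_fin k \<sigma> (rs ! (j - 1))) (rs ! j)"
  shows "erasing_chain k \<sigma> rs"
  using assms
proof (induction k \<sigma> rs rule: erasing_chain.induct)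
  case (3 k \<sigma> r r' R)
  have "k_rounding k (subst_fin k \<sigma> r) r'" using "3.prems"(4)[rule_format, of 1] by simp
  then have "\<exists>c. r' = subst_fin k \<sigma> r @ c" "k dvd length r'"
    unfolding k_rounding_def by (metis append_take_drop_id)+
  moreover have "erasing_chain k \<sigma> (r' # R)"
  proof (rule "3.IH")
    show "\<forall>j. 1 \<le> j \<and> j < length (r' # R) \<longrightarrow>
        k_rounding k (subst_fin k \<sigma> ((r' # R) ! (j - 1))) ((r' # R) ! j)"
    proof (intro allI impI)
      fix j assume "1 \<le> j \<and> j < length (r' # R)"
      then show "k_rounding k (subst_fin k \<sigma> ((r' # R) ! (j - 1))) ((r' # R) ! j)"
        using "3.prems"(4)[rule_format, of "Suc j"] by (cases j) auto
    qed
  qed (use "3.prems" \<open>k dvd length r'\<close> in auto)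
  ultimately show ?case using "3.prems"(2) by simp
qed auto

lemma strongly_erasing_chain:
  assumes "strongly_erasing k \<sigma>"
  shows "\<exists>rs. rs \<noteq> [] \<and> erasing_chain k \<sigma> rs \<and> (\<exists>c. rs ! 0 = w @ c) \<and>
    (k dvd length w \<longrightarrow> rs ! 0 = w)"
proof -
  obtain rs where rs: "rs \<noteq> []" "k_rounding k w (rs ! 0)" "subst_fin k \<sigma> (last rs) = []"
    "\<forall>j. 1 \<le> j \<and> j < length rs \<longrightarrow> k_rounding k (subst_fin k \<sigma> (rs ! (j - 1))) (rs ! j)"
    using assms unfolding strongly_erasing_def by blast
  have "erasing_chain k \<sigma> rs"
    using rs(2) by (intro erasing_chain_of_roundings[OF rs(1) _ rs(3,4)]) (simp add: k_rounding_def)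
  moreover have "\<exists>c. rs ! 0 = w @ c"
    using rs(2) unfolding k_rounding_def by (metis append_take_drop_id)
  moreover have "rs ! 0 = w" if "k dvd length w"
    using rs(2) that unfolding k_rounding_def by (metis order.refl take_all)
  ultimately show ?thesis using rs(1) by blast
qed

lemma erasing_chain_lift:
  assumes ES: "erasing_subst k \<sigma>" and OPT: "optimal k \<sigma>"
  shows "erasing_chain k \<sigma> R \<Longrightarrow> R \<noteq> [] \<Longrightarrow> \<exists>Z. \<forall>t<length R.
    prefix_of (R ! t) ((subst_inf k \<sigma> ^^ t) Z) \<and> nondegenerate k \<sigma> ((subst_inf k \<sigma> ^^ t) Z)"
proof (induction R)
  case (Cons r R)
  show ?case
  proof (cases R)
    case Nil
    then obtain Z where "prefix_of r Z" "nondegenerate k \<sigma> Z"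
      using Cons.prems subst_inf_preimage[OF ES OPT, of r "\<lambda>_. False"] by (auto simp: prefix_of_def)
    then show ?thesis using Nil by auto
  next
    case (Cons r' R')
    then obtain c where "k dvd length r" "r' = subst_fin k \<sigma> r @ c" "erasing_chain k \<sigma> R"
      using Cons.prems by auto
    moreover obtain Z' where Z': "\<forall>t<length R. prefix_of (R ! t) ((subst_inf k \<sigma> ^^ t) Z') \<and>
        nondegenerate k \<sigma> ((subst_inf k \<sigma> ^^ t) Z')"
      using Cons.IH calculation(3) Cons by blast
    moreover have "prefix_of r' Z'" using Z' Cons by fastforce
    ultimately obtain z where z: "prefix_of r z" "subst_inf k \<sigma> z = Z'" "nondegenerate k \<sigma> z"
      using subst_inf_preimage[OF ES OPT] prefix_of_appendD by metis
    have "prefix_of ((r # R) ! t) ((subst_inf k \<sigma> ^^ t) z) \<and>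
        nondegenerate k \<sigma> ((subst_inf k \<sigma> ^^ t) z)" if "t < length (r # R)" for t
    proof (cases t)
      case (Suc s)
      then show ?thesis using Z' that z(2) by (simp add: funpow_Suc_right del: funpow.simps)
    qed (use z in simp)
    then show ?thesis by blast
  qed
qed simp

subsection \<open>Extending a prefix\<close>

text \<open>Chaining the erasure of \<open>P\<close>, the erasure of \<open>v\<close> and \<open>T\<close> empty words, and lifting
  the chain, gives a point that starts with \<open>P\<close> and whose orbit passes through \<open>v\<close>.\<close>
lemma exists_orbit_through:
  assumes ES: "erasing_subst k \<sigma>" and SE: "strongly_erasing k \<sigma>" and OPT: "optimal k \<sigma>"
    and P: "k dvd length P"
  shows "\<exists>Z L. prefix_of P Z \<and> T < L \<and> (\<exists>n<L. prefix_of v ((subst_inf k \<sigma> ^^ n) Z)) \<and>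
    (\<forall>t<L. nondegenerate k \<sigma> ((subst_inf k \<sigma> ^^ t) Z))"
proof -
  obtain rs where rs: "rs \<noteq> []" "erasing_chain k \<sigma> rs" "rs ! 0 = P"
    using strongly_erasing_chain[OF SE, of P] P by blast
  obtain rs' c where rs': "rs' \<noteq> []" "erasing_chain k \<sigma> rs'" "rs' ! 0 = v @ c"
    using strongly_erasing_chain[OF SE, of v] by blast
  define R where "R = rs @ rs' @ replicate T []"
  have "erasing_chain k \<sigma> R"
    unfolding R_def using rs(2) rs'(2) by (intro erasing_chain_append erasing_chain_replicate_Nil)
  moreover have "R \<noteq> []" using rs(1) by (simp add: R_def)
  ultimately obtain Z where Z: "\<forall>t<length R. prefix_of (R ! t) ((subst_inf k \<sigma> ^^ t) Z) \<and>
      nondegenerate k \<sigma> ((subst_inf k \<sigma> ^^ t) Z)"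
    using erasing_chain_lift[OF ES OPT] by blast
  have R: "R ! 0 = P" "R ! length rs = v @ c" "length rs < length R" "T < length R"
    using rs rs' by (auto simp: R_def nth_append)
  have "prefix_of P Z" using Z R(1,3) by fastforce
  moreover have "prefix_of v ((subst_inf k \<sigma> ^^ length rs) Z)"
    using Z R(2,3) prefix_of_appendD by metis
  ultimately show ?thesis using Z R(3,4) by blast
qed

lemma nondegenerate_witnesses_below:
  assumes "nondegenerate k \<sigma> Y"
  shows "\<forall>\<^sub>F M in sequentially.
    (\<exists>i\<ge>T. i < M \<and> Y i) \<and> (\<exists>i\<ge>T. (i + 1) * k \<le> M \<and> \<sigma> (block k Y i) \<noteq> [])"
proof -
  obtain i where "T \<le> i" "Y i"
    using assms unfolding nondegenerate_def INFM_nat_le by blast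
  moreover obtain b where "T \<le> b" "\<sigma> (block k Y b) \<noteq> []"
    using assms unfolding nondegenerate_def INFM_nat_le by blast
  ultimately show ?thesis
    by (intro eventually_sequentiallyI[of "max (Suc i) ((b + 1) * k)"]) auto
qed

definition good_extension ::
    "nat \<Rightarrow> (bool list \<Rightarrow> bool list) \<Rightarrow> bool list \<Rightarrow> bool list \<Rightarrow> nat \<Rightarrow> bool list \<Rightarrow> bool" where
  "good_extension k \<sigma> P v T P' \<longleftrightarrow> (\<exists>c. P' = P @ c) \<and> k dvd length P' \<and>
    (\<forall>X. prefix_of P' X \<longrightarrow> (\<exists>n. prefix_of v ((subst_inf k \<sigma> ^^ n) X)) \<and>
      (\<forall>t\<le>T. (\<exists>i\<ge>T. (subst_inf k \<sigma> ^^ t) X i) \<and>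
        (\<exists>i\<ge>T. \<sigma> (block k ((subst_inf k \<sigma> ^^ t) X) i) \<noteq> [])))"

text \<open>A long enough prefix of the point given by \<open>exists_orbit_through\<close> works,
  because the iterates of \<open>subst_inf\<close> are continuous at that point.\<close>
lemma good_extension_exists:
  assumes ES: "erasing_subst k \<sigma>" and SE: "strongly_erasing k \<sigma>" and OPT: "optimal k \<sigma>"
    and P: "k dvd length P"
  shows "\<exists>P'. good_extension k \<sigma> P v T P'"
proof -
  have k: "0 < k" using erasing_subst_k_ge_2[OF ES] by simp
  obtain Z L n where Z: "prefix_of P Z" "T < L" "n < L" "prefix_of v ((subst_inf k \<sigma> ^^ n) Z)"
    and nondeg: "\<forall>t<L. nondegenerate k \<sigma> ((subst_inf k \<sigma> ^^ t) Z)"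
    using exists_orbit_through[OF ES SE OPT P] by blast
  let ?W = "\<lambda>t M. (\<exists>i\<ge>T. i < M \<and> (subst_inf k \<sigma> ^^ t) Z i) \<and>
    (\<exists>i\<ge>T. (i + 1) * k \<le> M \<and> \<sigma> (block k ((subst_inf k \<sigma> ^^ t) Z) i) \<noteq> [])"
  have "\<forall>\<^sub>F M in sequentially. length v \<le> M \<and> (\<forall>t\<in>{..T}. ?W t M)"
    using Z(2) nondeg
    by (intro eventually_conj eventually_ge_at_top eventually_ball_finite ballI
        nondegenerate_witnesses_below) auto
  then obtain M where M: "length v \<le> M" "\<forall>t\<le>T. ?W t M"
    unfolding eventually_sequentially by auto
  let ?agree = "\<lambda>t N. \<forall>X. (\<forall>i<N. X i = Z i) \<longrightarrow>
    (\<forall>i<M. (subst_inf k \<sigma> ^^ t) X i = (subst_inf k \<sigma> ^^ t) Z i)"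
  have "\<forall>\<^sub>F N in sequentially. ?agree t N" if "t < L" for t
  proof -
    have "\<forall>s<t. \<exists>\<^sub>\<infinity>i. \<sigma> (block k ((subst_inf k \<sigma> ^^ s) Z) i) \<noteq> []"
      using nondeg that unfolding nondegenerate_def by simp
    then obtain N where N: "?agree t N" using subst_inf_iter_continuous[OF k] by blast
    show ?thesis
    proof (rule eventually_sequentiallyI[of N], rule allI, rule impI)
      fix N' X assume "N \<le> N'" "\<forall>i<N'. X i = Z i"
      then have "\<forall>i<N. X i = Z i" by simp
      then show "\<forall>i<M. (subst_inf k \<sigma> ^^ t) X i = (subst_inf k \<sigma> ^^ t) Z i"
        by (rule mp[OF spec[OF N]])
    qed
  qed
  then have "\<forall>\<^sub>F N in sequentially. length P \<le> N \<and> (\<forall>t\<in>{..<L}. ?agree t N)"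
    by (intro eventually_conj eventually_ge_at_top eventually_ball_finite) auto
  then obtain N0 where N0: "\<forall>N\<ge>N0. length P \<le> N \<and> (\<forall>t\<in>{..<L}. ?agree t N)"
    unfolding eventually_sequentially by blast
  define N where "N = k * N0"
  have "N0 \<le> N" using k by (simp add: N_def)
  then have N: "length P \<le> N \<and> (\<forall>t\<in>{..<L}. ?agree t N)"
    by (rule mp[OF spec[OF N0]])
  define P' where "P' = map Z [0..<N]"
  have "\<exists>c. P' = P @ c" unfolding P'_def using Z(1) N[THEN conjunct1] by (rule map_upt_extends_prefix)
  moreover have "k dvd length P'" by (simp add: P'_def N_def)
  moreover have "(\<exists>n. prefix_of v ((subst_inf k \<sigma> ^^ n) X)) \<and>
      (\<forall>t\<le>T. (\<exists>i\<ge>T. (subst_inf k \<sigma> ^^ t) X i) \<and>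
        (\<exists>i\<ge>T. \<sigma> (block k ((subst_inf k \<sigma> ^^ t) X) i) \<noteq> []))"
    if "prefix_of P' X" for X
  proof -
    have X: "\<forall>i<N. X i = Z i" using that by (simp add: P'_def prefix_of_iff)
    have agree: "\<forall>i<M. (subst_inf k \<sigma> ^^ t) X i = (subst_inf k \<sigma> ^^ t) Z i" if "t < L" for t
    proof -
      have "?agree t N" by (rule bspec[OF N[THEN conjunct2]]) (simp add: that)
      from mp[OF spec[OF this] X] show ?thesis .
    qed
    have "prefix_of v ((subst_inf k \<sigma> ^^ n) X)"
      using prefix_of_agree[OF Z(4) M(1) agree[OF Z(3)]] .
    moreover have "(\<exists>i\<ge>T. (subst_inf k \<sigma> ^^ t) X i) \<and>
        (\<exists>i\<ge>T. \<sigma> (block k ((subst_inf k \<sigma> ^^ t) X) i) \<noteq> [])" if "t \<le> T" for t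
    proof -
      have AG: "\<forall>i<M. (subst_inf k \<sigma> ^^ t) X i = (subst_inf k \<sigma> ^^ t) Z i"
        using agree[OF le_less_trans[OF that Z(2)]] .
      from M(2)[rule_format, OF that] obtain i b where "T \<le> i" "i < M" "(subst_inf k \<sigma> ^^ t) Z i"
        and "T \<le> b" "(b + 1) * k \<le> M" "\<sigma> (block k ((subst_inf k \<sigma> ^^ t) Z) b) \<noteq> []"
        by blast
      moreover have "block k ((subst_inf k \<sigma> ^^ t) X) b = block k ((subst_inf k \<sigma> ^^ t) Z) b"
        using AG \<open>(b + 1) * k \<le> M\<close> by (intro block_cong) simp
      ultimately show ?thesis using AG by auto
    qed
    ultimately show ?thesis by blast
  qed
  ultimately show ?thesis unfolding good_extension_def by blast
qed

subsection \<open>Points with dense orbits\<close>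

lemma prefix_of_limit:
  assumes step: "\<And>j. \<exists>c. P (Suc j) = P j @ c" and long: "\<And>j. j < length (P (Suc j))"
  shows "prefix_of (P j) (\<lambda>i. P (Suc i) ! i)"
proof -
  have mono: "\<exists>c. P j' = P j @ c" if "j \<le> j'" for j j'
    using that
  proof (induction rule: dec_induct)
    case (step n)
    then show ?case using assms(1)[of n] by (metis append.assoc)
  qed simp
  show ?thesis unfolding prefix_of_iff
  proof (intro allI impI)
    fix i assume i: "i < length (P j)"
    obtain c c' where "P (max j (Suc i)) = P j @ c" "P (max j (Suc i)) = P (Suc i) @ c'"
      using mono[of j "max j (Suc i)"] mono[of "Suc i" "max j (Suc i)"] by auto
    then show "P (Suc i) ! i = P j ! i" using i long[of i] by (metis nth_append)
  qed
qed

lemma uncountable_bool_sequences: "uncountable (UNIV :: (nat \<Rightarrow> bool) set)"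
  unfolding uncountable_def
proof (intro conjI notI)
  assume "\<exists>f :: nat \<Rightarrow> nat \<Rightarrow> bool. range f = UNIV"
  then obtain f :: "nat \<Rightarrow> nat \<Rightarrow> bool" where "range f = UNIV" by blast
  then have "(\<lambda>n. \<not> f n n) \<in> range f" by simp
  then obtain m where "(\<lambda>n. \<not> f n n) = f m" by auto
  then show False by (metis (full_types))
qed simp

locale dense_orbit_construction =
  fixes k :: nat and \<sigma> :: "bool list \<Rightarrow> bool list"
  assumes erasing: "erasing_subst k \<sigma>"
    and strongly: "strongly_erasing k \<sigma>"
    and optimal: "optimal k \<sigma>"
begin

text \<open>Stage \<open>j + 1\<close> plants the bit \<open>s j\<close> as a whole block, so that distinct \<open>s\<close> give
  distinct points, and then extends so that the orbit visits the \<open>j\<close>-th finite word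
  \<open>from_nat j\<close> and the first \<open>j\<close> iterates have ones and non-erased blocks beyond \<open>j\<close>.\<close>
fun stage :: "bool list \<Rightarrow> (nat \<Rightarrow> bool) \<Rightarrow> nat \<Rightarrow> bool list" where
  "stage P s 0 = P"
| "stage P s (Suc j) =
    (SOME P'. good_extension k \<sigma> (stage P s j @ replicate k (s j)) (from_nat j) j P')"

definition limit_word :: "bool list \<Rightarrow> (nat \<Rightarrow> bool) \<Rightarrow> nat \<Rightarrow> bool" where
  "limit_word P s i = stage P s (Suc i) ! i"

lemma k_pos: "0 < k"
  using erasing_subst_k_ge_2[OF erasing] by simp

context
  fixes P :: "bool list" and s :: "nat \<Rightarrow> bool"
  assumes P: "k dvd length P"
begin

lemma stage_good_extension:
  "k dvd length (stage P s j) \<and>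
    good_extension k \<sigma> (stage P s j @ replicate k (s j)) (from_nat j) j (stage P s (Suc j))"
proof (induction j)
  case 0
  have "\<exists>P'. good_extension k \<sigma> (P @ replicate k (s 0)) (from_nat 0) 0 P'"
    using P by (intro good_extension_exists[OF erasing strongly optimal]) simp
  then show ?case using P by (simp add: someI_ex)
next
  case (Suc j)
  then have dvd: "k dvd length (stage P s (Suc j))" by (simp add: good_extension_def)
  then have "\<exists>P'. good_extension k \<sigma> (stage P s (Suc j) @ replicate k (s (Suc j)))
      (from_nat (Suc j)) (Suc j) P'"
    by (intro good_extension_exists[OF erasing strongly optimal]) simp
  then show ?case using dvd by (simp only: stage.simps(2)[of P s "Suc j"] someI_ex)
qed

lemma stage_Suc: "\<exists>c. stage P s (Suc j) = stage P s j @ replicate k (s j) @ c"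
  using stage_good_extension[of j] by (auto simp: good_extension_def)

lemma length_stage: "j * k \<le> length (stage P s j)"
proof (induction j)
  case (Suc j)
  then show ?case using stage_Suc[of j] by auto
qed simp

lemma prefix_of_stage_limit_word: "prefix_of (stage P s j) (limit_word P s)"
proof -
  have "\<exists>c. stage P s (Suc j) = stage P s j @ c" for j
    using stage_Suc[of j] by auto
  moreover have "j < length (stage P s (Suc j))" for j
  proof -
    have "Suc j \<le> Suc j * k" using mult_le_mono2[of 1 k "Suc j"] k_pos by simp
    then show ?thesis using length_stage[of "Suc j"] by linarith
  qed
  ultimately show ?thesis unfolding limit_word_def by (rule prefix_of_limit)
qed

lemma limit_word_bit: "limit_word P s (length (stage P s j)) = s j"
proof -
  obtain c where c: "stage P s (Suc j) = stage P s j @ replicate k (s j) @ c"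
    using stage_Suc by blast
  then show ?thesis
    using prefix_of_stage_limit_word[of "Suc j"] k_pos by (simp add: prefix_of_iff nth_append)
qed

lemma limit_word_good_extension:
  assumes "t \<le> j"
  shows "(\<exists>n. prefix_of (from_nat j) ((subst_inf k \<sigma> ^^ n) (limit_word P s))) \<and>
    (\<exists>i\<ge>j. (subst_inf k \<sigma> ^^ t) (limit_word P s) i) \<and>
    (\<exists>i\<ge>j. \<sigma> (block k ((subst_inf k \<sigma> ^^ t) (limit_word P s)) i) \<noteq> [])"
  using stage_good_extension[of j] prefix_of_stage_limit_word[of "Suc j"] assms
  unfolding good_extension_def by blast

lemma nondegenerate_iter_limit_word: "nondegenerate k \<sigma> ((subst_inf k \<sigma> ^^ t) (limit_word P s))"
  unfolding nondegenerate_def INFM_nat_le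
  using limit_word_good_extension[of t "max t _"] by (meson max.boundedE max.cobounded1 order_trans)

lemma orbit_limit_word_dense:
  "{0..1} \<subseteq> closure (range (\<lambda>n. (f_sigma k \<sigma> ^^ n) (binval_inf (limit_word P s))))"
proof (rule unit_interval_subset_closure[OF k_pos])
  fix v :: "bool list"
  obtain n where "prefix_of v ((subst_inf k \<sigma> ^^ n) (limit_word P s))"
    using limit_word_good_extension[of 0 "to_nat v"] by auto
  moreover have "binval_inf ((subst_inf k \<sigma> ^^ n) (limit_word P s))
      = (f_sigma k \<sigma> ^^ n) (binval_inf (limit_word P s))"
    using f_sigma_iter_binval_inf[OF erasing nondegenerate_iter_limit_word] by simp
  ultimately show "\<exists>X. prefix_of v X \<and> binval_inf X \<in> range (\<lambda>n. (f_sigma k \<sigma> ^^ n) (binval_inf (limit_word P s)))"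
    by auto
qed

end

lemma stage_cong: "\<forall>i<j. s i = s' i \<Longrightarrow> stage P s j = stage P s' j"
  by (induction j) auto

lemma inj_binval_inf_limit_word:
  assumes "k dvd length P"
  shows "inj (\<lambda>s. binval_inf (limit_word P s))"
proof (rule injI)
  fix s s' assume eq: "binval_inf (limit_word P s) = binval_inf (limit_word P s')"
  have "limit_word P s = limit_word P s'"
    using binval_inf_inj[OF _ _ eq] nondegenerate_iter_limit_word[OF assms, of 0]
    by (simp add: nondegenerate_def)
  then have step: "s j = s' j" if "\<forall>i<j. s i = s' i" for j
    using limit_word_bit[OF assms, of s j] limit_word_bit[OF assms, of s' j] stage_cong[OF that] by simp
  have "s j = s' j" for j
    by (induction j rule: less_induct) (simp add: step)
  then show "s = s'" ..
qed

end

theorem lemma4p3: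
  fixes k :: nat and \<sigma> :: "bool list \<Rightarrow> bool list"
  assumes "erasing_subst k \<sigma>"
    and "strongly_erasing k \<sigma>"
    and "w_eps k \<sigma> \<noteq> replicate k True"
    and "optimal k \<sigma>"
  defines "D \<equiv> {x \<in> {0..1::real}. {0..1} \<subseteq> closure (range (\<lambda>n. (f_sigma k \<sigma> ^^ n) x))}"
  shows "uncountable D \<and> {0..1} \<subseteq> closure D"
proof
  interpret dense_orbit_construction k \<sigma>
    using assms(1,2,4) by unfold_locales
  have in_D: "binval_inf (limit_word P s) \<in> D" if "k dvd length P" for P s
    unfolding D_def using orbit_limit_word_dense[OF that] binval_inf_nonneg binval_inf_le_1 by auto
  have "range (\<lambda>s. binval_inf (limit_word [] s)) \<subseteq> D"
    using in_D[of "[]"] by auto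
  moreover have "uncountable (range (\<lambda>s. binval_inf (limit_word [] s)))"
    using uncountable_bool_sequences inj_binval_inf_limit_word[of "[]"]
    by (metis countable_image_inj_on dvd_0_right list.size(3))
  ultimately show "uncountable D"
    using countable_subset by blast
  show "{0..1} \<subseteq> closure D"
  proof (rule unit_interval_subset_closure[OF k_pos])
    fix v :: "bool list" assume "k dvd length v"
    then show "\<exists>X. prefix_of v X \<and> binval_inf X \<in> D"
      using prefix_of_stage_limit_word[of v _ 0] in_D by fastforce
  qed
qed

end
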